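(* Fix $m\ge2$ and let $f(\ell)=o(1)$. Suppose there exists a function $k:\mathbb N\to\mathbb N$ with $k(\ell)\le \ell$ for all $\ell$ such that, as $\ell\to\infty$, $$k(\ell)-2\ell f(\ell)\to\infty \qquad\text{and}\qquad \frac{\ell-2}{(2k(\ell)+2)(2m-1)^{2k(\ell)}}\to\infty .$$ Then asymptotically almost surely a random group $G\in\mathcal H(f)$ is isomorphic to $1$ or to $\mathbb Z/2\mathbb Z$.
   Context: The random group model $\mathcal H(f)$: for each length $\ell$, choose $(2m-1)^{\ell(\frac12-f(\ell))}$ relators (an integer count), independently and uniformly at random from the freely reduced words of length $\ell$ (not necessarily cyclically reduced) in $m$ generators and their inverses; $G$ is the group presented by the $m$ generators and these relators. "Asymptotically almost surely" means with probability tending to $1$ as $\ell\to\infty$. *)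

theory Defs
  imports "HOL-Analysis.Analysis" "HOL-Algebra.Algebra"
begin

text \<open>Letters: (i, False) is the generator a_i, (i, True) is its inverse; generators are 0..m-1.\<close>
type_synonym letter = "nat \<times> bool"

definition inv_letter :: "letter \<Rightarrow> letter" where
  "inv_letter a = (fst a, \<not> snd a)"

definition letters :: "nat \<Rightarrow> letter set" where
  "letters m = {a. fst a < m}"

fun freely_reduced :: "letter list \<Rightarrow> bool" where
  "freely_reduced (a # b # w) = (b \<noteq> inv_letter a \<and> freely_reduced (b # w))"
| "freely_reduced _ = True"

definition reduced_words :: "nat \<Rightarrow> nat \<Rightarrow> letter list set" where
  "reduced_words m l = {w. set w \<subseteq> letters m \<and> length w = l \<and> freely_reduced w}"

inductive pres_step :: "letter list set \<Rightarrow> letter list \<Rightarrow> letter list \<Rightarrow> bool" for R where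
  cancel: "pres_step R (u @ v) (u @ [a, inv_letter a] @ v)"
| relator: "r \<in> R \<Longrightarrow> pres_step R (u @ v) (u @ r @ v)"

definition pres_rel :: "nat \<Rightarrow> letter list set \<Rightarrow> (letter list \<times> letter list) set" where
  "pres_rel m R = Restr ((({(x, y). pres_step R x y} \<union> {(x, y). pres_step R y x}))\<^sup>*)
                        (lists (letters m))"

definition presented_group :: "nat \<Rightarrow> letter list set \<Rightarrow> letter list set monoid" where
  "presented_group m R =
     \<lparr>carrier = lists (letters m) // pres_rel m R,
      monoid.mult = (\<lambda>P Q. Image (pres_rel m R) {x @ y | x y. x \<in> P \<and> y \<in> Q}),
      one = Image (pres_rel m R) {[]}\<rparr>"

definition Z2_group :: "int monoid" where
  "Z2_group = \<lparr>carrier = {0, 1}, monoid.mult = (\<lambda>x y. (x + y) mod 2), one = 0\<rparr>"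

definition num_relators :: "nat \<Rightarrow> (nat \<Rightarrow> real) \<Rightarrow> nat \<Rightarrow> nat" where
  "num_relators m f l = nat \<lfloor>(2 * real m - 1) powr (real l * (1/2 - f l))\<rfloor>"

text \<open>All relator tuples (independent uniform choices = uniform on tuples).\<close>
definition relator_tuples :: "nat \<Rightarrow> (nat \<Rightarrow> real) \<Rightarrow> nat \<Rightarrow> letter list list set" where
  "relator_tuples m f l = {rs. length rs = num_relators m f l \<and> set rs \<subseteq> reduced_words m l}"

definition prob_H :: "nat \<Rightarrow> (nat \<Rightarrow> real) \<Rightarrow> nat \<Rightarrow> (letter list set monoid \<Rightarrow> bool) \<Rightarrow> real" where
  "prob_H m f l P = real (card {rs \<in> relator_tuples m f l. P (presented_group m (set rs))})
                     / real (card (relator_tuples m f l))"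

end

theory Submission
  imports Defs "HOL-Real_Asymp.Real_Asymp"
begin

text \<open>Fix the generator \<open>a\<^sub>0\<close>. If two relators differ in a single letter, \<open>u x v\<close> and
  \<open>u a\<^sub>0 v\<close>, then \<open>x = a\<^sub>0\<close> in \<open>G\<close>; if this happens for every letter \<open>x\<close> (inverses included),
  then \<open>G\<close> is generated by \<open>a\<^sub>0\<close> with \<open>a\<^sub>0 = a\<^sub>0\<^sup>-\<^sup>1\<close>, so \<open>G\<close> is \<open>1\<close> or \<open>\<int>/2\<int>\<close>.
  For a fixed \<open>x\<close>, let \<open>X\<close> count the pairs of relators (one from each half of the list) that
  differ exactly by \<open>x \<mapsto> a\<^sub>0\<close>. There are at least \<open>(\<ell> - 2)(2m - 1)\<^bsup>\<ell>-3\<^esup>\<close> such pairs of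
  reduced words, and each word has at most \<open>\<ell>\<close> partners, so the second moment method
  (\<open>P(X = 0) \<le> 1 - E[X]\<^sup>2/E[X\<^sup>2]\<close>) bounds \<open>P(X = 0)\<close> by roughly
  \<open>(2m-1)\<^sup>\<ell>/(N\<^sup>2 \<ell>) + 1/N\<close> for \<open>N\<close> relators. The hypotheses on \<open>k\<close> make
  \<open>(2m-1)\<^sup>\<ell>/N\<^sup>2 \<le> 4(2m-1)\<^sup>k = o(\<ell>)\<close>, and a union bound over the \<open>2m\<close> letters finishes.\<close>

section \<open>Freely reduced words\<close>

lemma letters_eq: "letters m = {..<m} \<times> UNIV"
  unfolding letters_def by auto

lemma finite_letters [simp]: "finite (letters m)"
  unfolding letters_eq by simp

lemma card_letters: "card (letters m) = 2 * m"
  unfolding letters_eq by (simp add: card_cartesian_product)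

lemma inv_letter_inv_letter [simp]: "inv_letter (inv_letter a) = a"
  unfolding inv_letter_def by simp

lemma inv_letter_eq_iff: "inv_letter a = b \<longleftrightarrow> a = inv_letter b"
  unfolding inv_letter_def by auto

lemma inv_letter_in_letters_iff [simp]: "inv_letter a \<in> letters m \<longleftrightarrow> a \<in> letters m"
  unfolding inv_letter_def letters_def by simp

lemma finite_reduced_words [simp]: "finite (reduced_words m l)"
proof (rule finite_subset)
  show "reduced_words m l \<subseteq> {w. set w \<subseteq> letters m \<and> length w = l}"
    unfolding reduced_words_def by auto
qed (rule finite_lists_length_eq[OF finite_letters])

lemma reduced_words_0: "reduced_words m 0 = {[]}"
  by (auto simp: reduced_words_def)

lemma freely_reduced_Cons_iff:
  "freely_reduced (x # w) \<longleftrightarrow> freely_reduced w \<and> (w = [] \<or> hd w \<noteq> inv_letter x)"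
  by (cases w) auto

lemma freely_reduced_snoc_iff:
  "freely_reduced (w @ [x]) \<longleftrightarrow> freely_reduced w \<and> (w = [] \<or> x \<noteq> inv_letter (last w))"
  by (induction w rule: freely_reduced.induct) auto

lemma freely_reduced_append_Cons_iff:
  "freely_reduced (u @ x # v) \<longleftrightarrow> freely_reduced (u @ [x]) \<and> freely_reduced (x # v)"
  by (induction u rule: freely_reduced.induct) (auto simp: freely_reduced_Cons_iff)

lemma freely_reduced_rev [simp]: "freely_reduced (rev w) \<longleftrightarrow> freely_reduced w"
  by (induction w) (auto simp: freely_reduced_snoc_iff freely_reduced_Cons_iff last_rev inv_letter_def)

lemma rev_in_reduced_words_iff [simp]: "rev w \<in> reduced_words m l \<longleftrightarrow> w \<in> reduced_words m l"
  by (auto simp: reduced_words_def)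

lemma card_reduced_words_hd_notin_ge:
  assumes "finite E"
  shows "(2 * m - 1 - card E) * card (reduced_words m n)
           \<le> card {w \<in> reduced_words m (Suc n). hd w \<notin> E}"
proof -
  define S where "S = Sigma (reduced_words m n) (\<lambda>v. letters m - insert (inv_letter (hd v)) E)"
  have "(2 * m - 1 - card E) * card (reduced_words m n)
          \<le> (\<Sum>v\<in>reduced_words m n. card (letters m - insert (inv_letter (hd v)) E))"
  proof -
    have "2 * m - 1 - card E \<le> card (letters m - insert z E)" for z
    proof -
      have "card (letters m) - card (insert z E) \<le> card (letters m - insert z E)"
        by (rule diff_card_le_card_Diff) (use assms in simp)
      moreover have "card (insert z E) \<le> card E + 1"
        using assms by (simp add: card_insert_if)
      ultimately show ?thesis using card_letters[of m] by linarith
    qed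
    then show ?thesis using sum_mono[of "reduced_words m n" "\<lambda>_. 2 * m - 1 - card E"]
      by (simp add: mult.commute)
  qed
  also have "\<dots> = card S"
    unfolding S_def by (rule card_SigmaI[symmetric]) auto
  also have "\<dots> \<le> card {w \<in> reduced_words m (Suc n). hd w \<notin> E}"
  proof (rule card_inj_on_le)
    show "inj_on (\<lambda>(v, y). y # v) S" by (auto simp: inj_on_def)
    show "(\<lambda>(v, y). y # v) ` S \<subseteq> {w \<in> reduced_words m (Suc n). hd w \<notin> E}"
      by (auto simp: S_def reduced_words_def freely_reduced_Cons_iff inv_letter_def)
  qed simp
  finally show ?thesis .
qed

lemma card_reduced_words_last_notin_ge:
  assumes "finite E"
  shows "(2 * m - 1 - card E) * card (reduced_words m n)
           \<le> card {w \<in> reduced_words m (Suc n). last w \<notin> E}"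
proof -
  let ?H = "{w \<in> reduced_words m (Suc n). hd w \<notin> E}"
  have "{w \<in> reduced_words m (Suc n). last w \<notin> E} = rev ` ?H"
  proof
    show "{w \<in> reduced_words m (Suc n). last w \<notin> E} \<subseteq> rev ` ?H"
    proof
      fix w assume "w \<in> {w \<in> reduced_words m (Suc n). last w \<notin> E}"
      then have "rev w \<in> ?H" by (simp add: hd_rev)
      then show "w \<in> rev ` ?H" using image_eqI[of w rev "rev w"] by simp
    qed
    show "rev ` ?H \<subseteq> {w \<in> reduced_words m (Suc n). last w \<notin> E}"
      by (auto simp: last_rev)
  qed
  moreover have "card (rev ` ?H) = card ?H"
    by (rule card_image) (simp add: inj_on_def)
  ultimately show ?thesis using card_reduced_words_hd_notin_ge[OF assms] by simp
qed

lemma card_reduced_words_ge: "(2 * m - 1) ^ n \<le> card (reduced_words m n)"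
proof (induction n)
  case (Suc n)
  have "(2 * m - 1) * card (reduced_words m n) \<le> card (reduced_words m (Suc n))"
    using card_reduced_words_hd_notin_ge[of "{}" m n] by simp
  moreover have "(2 * m - 1) ^ Suc n \<le> (2 * m - 1) * card (reduced_words m n)"
    using Suc.IH by simp
  ultimately show ?case by linarith
qed (simp add: reduced_words_0)

lemma card_reduced_words_avoiding_ge:
  assumes "m \<ge> 2" and "finite E" and "card E \<le> 2"
  shows "(2 * m - 1) ^ n \<le> card {w \<in> reduced_words m (Suc n). hd w \<notin> E}"
    and "(2 * m - 1) ^ n \<le> card {w \<in> reduced_words m (Suc n). last w \<notin> E}"
proof -
  have "1 \<le> 2 * m - 1 - card E" using assms by linarith
  then have "card (reduced_words m n) \<le> (2 * m - 1 - card E) * card (reduced_words m n)"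
    by simp
  then show "(2 * m - 1) ^ n \<le> card {w \<in> reduced_words m (Suc n). hd w \<notin> E}"
    and "(2 * m - 1) ^ n \<le> card {w \<in> reduced_words m (Suc n). last w \<notin> E}"
    using card_reduced_words_ge[of m n] card_reduced_words_hd_notin_ge[OF assms(2), of m n]
      card_reduced_words_last_notin_ge[OF assms(2), of m n] by linarith+
qed

lemma card_reduced_words_1: "card (reduced_words m 1) \<le> 2 * m"
proof -
  have "reduced_words m 1 \<subseteq> (\<lambda>y. [y]) ` letters m"
    by (auto simp: reduced_words_def length_Suc_conv)
  then have "card (reduced_words m 1) \<le> card ((\<lambda>y. [y]) ` letters m)"
    by (rule card_mono[rotated]) simp
  also have "\<dots> \<le> card (letters m)" by (rule card_image_le) simp
  finally show ?thesis by (simp add: card_letters)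
qed

lemma card_reduced_words_Suc_le:
  assumes "n \<ge> 1"
  shows "card (reduced_words m (Suc n)) \<le> (2 * m - 1) * card (reduced_words m n)"
proof -
  define S where "S = Sigma (reduced_words m n) (\<lambda>v. letters m - {inv_letter (hd v)})"
  have "reduced_words m (Suc n) \<subseteq> (\<lambda>(v, y). y # v) ` S"
  proof
    fix w assume w: "w \<in> reduced_words m (Suc n)"
    then obtain y v where yv: "w = y # v" "length v = n"
      by (auto simp: reduced_words_def length_Suc_conv)
    then have "v \<noteq> []" using assms by auto
    then have "(v, y) \<in> S"
      using w yv by (auto simp: S_def reduced_words_def freely_reduced_Cons_iff inv_letter_def)
    then show "w \<in> (\<lambda>(v, y). y # v) ` S" using yv by force
  qed
  then have "card (reduced_words m (Suc n)) \<le> card ((\<lambda>(v, y). y # v) ` S)"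
    by (rule card_mono[rotated]) (simp add: S_def)
  also have "\<dots> \<le> card S"
    by (rule card_image_le) (simp add: S_def)
  also have "card S = (\<Sum>v\<in>reduced_words m n. card (letters m - {inv_letter (hd v)}))"
    unfolding S_def by (rule card_SigmaI) auto
  also have "\<dots> = (\<Sum>v\<in>reduced_words m n. 2 * m - 1)"
  proof (rule sum.cong[OF refl])
    fix v assume "v \<in> reduced_words m n"
    then have "hd v \<in> letters m" using assms by (cases v) (auto simp: reduced_words_def)
    then show "card (letters m - {inv_letter (hd v)}) = 2 * m - 1"
      by (simp add: card_letters)
  qed
  finally show ?thesis by (simp add: mult.commute)
qed

lemma card_reduced_words_le:
  assumes "m \<ge> 1"
  shows "card (reduced_words m n) \<le> 2 * (2 * m - 1) ^ n"
proof (induction n)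
  case 0
  then show ?case by (simp add: reduced_words_0)
next
  case (Suc n)
  show ?case
  proof (cases "n = 0")
    case True
    then show ?thesis using card_reduced_words_1[of m] assms by simp
  next
    case False
    then have "card (reduced_words m (Suc n)) \<le> (2 * m - 1) * card (reduced_words m n)"
      by (intro card_reduced_words_Suc_le) simp
    also have "\<dots> \<le> (2 * m - 1) * (2 * (2 * m - 1) ^ n)"
      using Suc.IH by simp
    finally show ?thesis by (simp add: algebra_simps)
  qed
qed

section \<open>Word equivalence in a presented group\<close>

definition word_equiv :: "letter list set \<Rightarrow> letter list rel" where
  "word_equiv R = ({(x, y). pres_step R x y} \<union> {(x, y). pres_step R x y}\<inverse>)\<^sup>*"

lemma pres_rel_eq: "pres_rel m R = Restr (word_equiv R) (lists (letters m))"
proof -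
  have "{(x, y). pres_step R y x} = {(x, y). pres_step R x y}\<inverse>" by auto
  then show ?thesis unfolding pres_rel_def word_equiv_def by simp
qed

lemma word_equiv_refl [simp]: "(x, x) \<in> word_equiv R"
  unfolding word_equiv_def by simp

lemma word_equiv_sym: "(x, y) \<in> word_equiv R \<Longrightarrow> (y, x) \<in> word_equiv R"
  using sym_rtrancl[OF sym_Un_converse, of "{(x, y). pres_step R x y}"]
  unfolding word_equiv_def by (blast dest: symD)

lemma word_equiv_trans: "(x, y) \<in> word_equiv R \<Longrightarrow> (y, z) \<in> word_equiv R \<Longrightarrow> (x, z) \<in> word_equiv R"
  unfolding word_equiv_def by (rule rtrancl_trans)

lemma pres_step_in_word_equiv: "pres_step R x y \<Longrightarrow> (x, y) \<in> word_equiv R"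
  unfolding word_equiv_def by auto

lemma pres_step_in_context: "pres_step R x y \<Longrightarrow> pres_step R (s @ x @ t) (s @ y @ t)"
proof (induction rule: pres_step.induct)
  case (cancel u v a)
  show ?case using pres_step.cancel[of R "s @ u" "v @ t" a] by simp
next
  case (relator r u v)
  show ?case using pres_step.relator[OF relator, of "s @ u" "v @ t"] by simp
qed

lemma word_equiv_in_context:
  "(x, y) \<in> word_equiv R \<Longrightarrow> (s @ x @ t, s @ y @ t) \<in> word_equiv R"
  unfolding word_equiv_def
proof (induction rule: rtrancl_induct)
  case (step y z)
  then have "(s @ y @ t, s @ z @ t) \<in> {(x, y). pres_step R x y} \<union> {(x, y). pres_step R x y}\<inverse>"
    using pres_step_in_context by auto
  with step.IH show ?case by (rule rtrancl_into_rtrancl)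
qed simp

lemma word_equiv_append:
  assumes "(x, y) \<in> word_equiv R" and "(x', y') \<in> word_equiv R"
  shows "(x @ x', y @ y') \<in> word_equiv R"
proof -
  have "(x @ x', y @ x') \<in> word_equiv R" "(y @ x', y @ y') \<in> word_equiv R"
    using word_equiv_in_context[OF assms(1), of "[]" x'] word_equiv_in_context[OF assms(2), of y "[]"]
    by simp_all
  then show ?thesis by (rule word_equiv_trans)
qed

lemma relator_equiv_Nil: "r \<in> R \<Longrightarrow> ([], r) \<in> word_equiv R"
  using pres_step_in_word_equiv[OF pres_step.relator[of r R "[]" "[]"]] by simp

definition inv_word :: "letter list \<Rightarrow> letter list" where
  "inv_word u = rev (map inv_letter u)"

lemma Nil_equiv_inv_word_append: "([], inv_word u @ u) \<in> word_equiv R"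
proof (induction u)
  case (Cons a u)
  have "(inv_word u @ u, inv_word u @ [inv_letter a, a] @ u) \<in> word_equiv R"
    using pres_step_in_word_equiv[OF pres_step.cancel[of R "inv_word u" u "inv_letter a"]] by simp
  from word_equiv_trans[OF Cons.IH this] show ?case by (simp add: inv_word_def)
qed (simp add: inv_word_def)

lemma Nil_equiv_append_inv_word: "([], u @ inv_word u) \<in> word_equiv R"
proof (induction u rule: rev_induct)
  case (snoc a u)
  have "(u @ inv_word u, u @ [a, inv_letter a] @ inv_word u) \<in> word_equiv R"
    using pres_step_in_word_equiv[OF pres_step.cancel[of R u "inv_word u" a]] by simp
  from word_equiv_trans[OF snoc.IH this] show ?case by (simp add: inv_word_def)
qed (simp add: inv_word_def)

text \<open>Both \<open>[c]\<close> and \<open>[d]\<close> are equivalent to \<open>inv_word u @ inv_word v\<close>.\<close>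
lemma letter_equiv_of_relators:
  assumes "u @ [c] @ v \<in> R" and "u @ [d] @ v \<in> R"
  shows "([c], [d]) \<in> word_equiv R"
proof -
  have "([x], inv_word u @ inv_word v) \<in> word_equiv R" if "u @ [x] @ v \<in> R" for x
  proof -
    have "([x], (inv_word u @ u) @ [x] @ (v @ inv_word v)) \<in> word_equiv R"
      using word_equiv_append[OF Nil_equiv_inv_word_append[of u R]
          word_equiv_append[OF word_equiv_refl[of "[x]"] Nil_equiv_append_inv_word[of v R]]]
      by simp
    moreover have "(inv_word u @ inv_word v, (inv_word u @ u) @ [x] @ (v @ inv_word v)) \<in> word_equiv R"
      using word_equiv_in_context[OF relator_equiv_Nil[OF that]] by simp
    ultimately show ?thesis by (rule word_equiv_trans[OF _ word_equiv_sym])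
  qed
  from this[OF assms(1)] this[OF assms(2)] show ?thesis
    by (rule word_equiv_trans[OF _ word_equiv_sym])
qed

section \<open>Presented groups generated by a single involution\<close>

lemma pres_rel_Image:
  "w \<in> lists (letters m) \<Longrightarrow>
     pres_rel m R `` {w} = {y \<in> lists (letters m). (w, y) \<in> word_equiv R}"
  unfolding pres_rel_eq by auto

lemma presented_group_class_eqI:
  assumes "w \<in> lists (letters m)" "w' \<in> lists (letters m)" "(w, w') \<in> word_equiv R"
  shows "pres_rel m R `` {w} = pres_rel m R `` {w'}"
  using assms word_equiv_trans[OF assms(3)] word_equiv_trans[OF word_equiv_sym[OF assms(3)]]
  by (auto simp: pres_rel_Image)

lemma presented_group_mult_classes:
  assumes u: "u \<in> lists (letters m)" and v: "v \<in> lists (letters m)"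
  shows "pres_rel m R `` {u} \<otimes>\<^bsub>presented_group m R\<^esub> pres_rel m R `` {v} = pres_rel m R `` {u @ v}"
proof -
  let ?S = "{x @ y |x y. x \<in> pres_rel m R `` {u} \<and> y \<in> pres_rel m R `` {v}}"
  have uv: "u @ v \<in> lists (letters m)" using u v by simp
  have "pres_rel m R `` ?S \<subseteq> pres_rel m R `` {u @ v}"
  proof
    fix z assume "z \<in> pres_rel m R `` ?S"
    then obtain x y where "x \<in> pres_rel m R `` {u}" "y \<in> pres_rel m R `` {v}"
      and xyz: "(x @ y, z) \<in> pres_rel m R"
      by blast
    then have "(u, x) \<in> word_equiv R" "(v, y) \<in> word_equiv R"
      using u v by (simp_all add: pres_rel_Image)
    from word_equiv_trans[OF word_equiv_append[OF this]] xyz uv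
    show "z \<in> pres_rel m R `` {u @ v}"
      by (simp add: pres_rel_eq)
  qed
  moreover have "u \<in> pres_rel m R `` {u}" "v \<in> pres_rel m R `` {v}"
    using u v by (simp_all add: pres_rel_Image)
  then have "u @ v \<in> ?S" by blast
  then have "pres_rel m R `` {u @ v} \<subseteq> pres_rel m R `` ?S" by blast
  ultimately show ?thesis by (simp add: presented_group_def)
qed

lemma word_equiv_Nil_or_letter:
  assumes "\<And>x. x \<in> letters m \<Longrightarrow> ([x], [a]) \<in> word_equiv R"
    and "([a, a], []) \<in> word_equiv R"
    and "w \<in> lists (letters m)"
  shows "(w, []) \<in> word_equiv R \<or> (w, [a]) \<in> word_equiv R"
  using assms(3)
proof (induction w)
  case (Cons x w)
  then have x: "([x], [a]) \<in> word_equiv R" using assms(1) by simp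
  from Cons show ?case
  proof (elim disjE)
    assume "(w, []) \<in> word_equiv R"
    with x have "([x] @ w, [a] @ []) \<in> word_equiv R" by (rule word_equiv_append)
    then show ?thesis by simp
  next
    assume "(w, [a]) \<in> word_equiv R"
    with x have "([x] @ w, [a] @ [a]) \<in> word_equiv R" by (rule word_equiv_append)
    then have "(x # w, []) \<in> word_equiv R"
      using word_equiv_trans[OF _ assms(2)] by simp
    then show ?thesis ..
  qed
qed simp

lemma letter_square_equiv_Nil:
  assumes a: "a \<in> letters m" and gen: "\<And>x. x \<in> letters m \<Longrightarrow> ([x], [a]) \<in> word_equiv R"
  shows "([a, a], []) \<in> word_equiv R"
proof -
  have "([a, a], [a, inv_letter a]) \<in> word_equiv R"
    using word_equiv_in_context[OF word_equiv_sym[OF gen], of "inv_letter a" "[a]" "[]"] a by simp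
  moreover have "([a, inv_letter a], []) \<in> word_equiv R"
    using word_equiv_sym[OF pres_step_in_word_equiv[OF pres_step.cancel[of R "[]" "[]" a]]]
    by simp
  ultimately show ?thesis by (rule word_equiv_trans)
qed

lemma carrier_presented_group_eq:
  assumes a: "a \<in> letters m" and gen: "\<And>x. x \<in> letters m \<Longrightarrow> ([x], [a]) \<in> word_equiv R"
  shows "carrier (presented_group m R) = {pres_rel m R `` {[]}, pres_rel m R `` {[a]}}"
proof
  have words: "[] \<in> lists (letters m)" "[a] \<in> lists (letters m)" using a by auto
  show "carrier (presented_group m R) \<subseteq> {pres_rel m R `` {[]}, pres_rel m R `` {[a]}}"
  proof
    fix C assume "C \<in> carrier (presented_group m R)"
    then have "C \<in> lists (letters m) // pres_rel m R"
      by (simp add: presented_group_def)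
    then obtain w where w: "C = pres_rel m R `` {w}" "w \<in> lists (letters m)"
      by (rule quotientE)
    then show "C \<in> {pres_rel m R `` {[]}, pres_rel m R `` {[a]}}"
      using word_equiv_Nil_or_letter[OF gen letter_square_equiv_Nil[OF a gen] w(2)]
        presented_group_class_eqI words by blast
  qed
  show "{pres_rel m R `` {[]}, pres_rel m R `` {[a]}} \<subseteq> carrier (presented_group m R)"
    using words unfolding presented_group_def by (auto intro: quotientI)
qed

lemma presented_group_trivial_or_Z2:
  assumes a: "a \<in> letters m" and gen: "\<And>x. x \<in> letters m \<Longrightarrow> ([x], [a]) \<in> word_equiv R"
  shows "presented_group m R \<cong> singleton_group () \<or> presented_group m R \<cong> Z2_group"
proof -
  let ?G = "presented_group m R"
  define C0 C1 where "C0 = pres_rel m R `` {[]}" and "C1 = pres_rel m R `` {[a]}"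
  have words: "[] \<in> lists (letters m)" "[a] \<in> lists (letters m)" "[a, a] \<in> lists (letters m)"
    using a by auto
  have carrier: "carrier ?G = {C0, C1}"
    unfolding C0_def C1_def by (rule carrier_presented_group_eq[OF a gen])
  have mult: "C0 \<otimes>\<^bsub>?G\<^esub> C0 = C0" "C0 \<otimes>\<^bsub>?G\<^esub> C1 = C1"
    "C1 \<otimes>\<^bsub>?G\<^esub> C0 = C1" "C1 \<otimes>\<^bsub>?G\<^esub> C1 = C0"
    using presented_group_mult_classes[OF words(1) words(1)]
      presented_group_mult_classes[OF words(1) words(2)]
      presented_group_mult_classes[OF words(2) words(1)]
      presented_group_mult_classes[OF words(2) words(2)]
      presented_group_class_eqI[OF words(3) words(1) letter_square_equiv_Nil[OF a gen]]
    unfolding C0_def C1_def by simp_all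
  show ?thesis
  proof (cases "C0 = C1")
    case True
    have "(\<lambda>_. ()) \<in> Group.iso ?G (singleton_group ())"
      unfolding Group.iso_def hom_def using carrier True
      by (auto simp: singleton_group_def bij_betw_def inj_on_def)
    then show ?thesis by (blast intro: is_isoI)
  next
    case False
    have "(\<lambda>C. if C = C0 then 0 else 1) \<in> Group.iso ?G Z2_group"
      unfolding Group.iso_def hom_def using carrier False mult
      by (auto simp: Z2_group_def bij_betw_def inj_on_def)
    then show ?thesis by (blast intro: is_isoI)
  qed
qed

section \<open>Sums over tuples\<close>

definition tuples :: "'a set \<Rightarrow> nat \<Rightarrow> 'a list set" where
  "tuples W N = {rs. length rs = N \<and> set rs \<subseteq> W}"

lemma card_tuples: "finite W \<Longrightarrow> card (tuples W N) = card W ^ N"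
  using card_lists_length_eq[of W N] unfolding tuples_def by (simp add: conj_commute)

lemma finite_tuples [simp]: "finite W \<Longrightarrow> finite (tuples W N)"
  using finite_lists_length_eq[of W N] unfolding tuples_def by (simp add: conj_commute)

lemma tuples_0: "tuples W 0 = {[]}"
  unfolding tuples_def by auto

lemma sum_tuples_Suc:
  assumes "finite W"
  shows "(\<Sum>ws\<in>tuples W (Suc n). g ws) = (\<Sum>w\<in>W. \<Sum>ws\<in>tuples W n. g (w # ws))"
proof -
  have "tuples W (Suc n) = (\<lambda>(w, ws). w # ws) ` (W \<times> tuples W n)"
    unfolding tuples_def by (auto simp: length_Suc_conv image_iff)
  then show ?thesis
    using assms by (simp add: sum.reindex inj_on_def sum.cartesian_product split_beta)
qed

definition tuples_with_entries :: "'a set \<Rightarrow> nat \<Rightarrow> nat list \<Rightarrow> 'a list \<Rightarrow> 'a list set" where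
  "tuples_with_entries W N I ws = {rs \<in> tuples W N. map (nth rs) I = ws}"

lemma card_tuples_with_entries_Cons_le:
  assumes "finite W" "i < N" "i \<notin> set I" "w' \<in> W"
  shows "card (tuples_with_entries W N (i # I) (w # ws)) \<le> card (tuples_with_entries W N (i # I) (w' # ws))"
proof (rule card_inj_on_le)
  show "inj_on (\<lambda>rs. rs[i := w']) (tuples_with_entries W N (i # I) (w # ws))"
  proof (rule inj_onI)
    fix x y
    assume "x \<in> tuples_with_entries W N (i # I) (w # ws)" "y \<in> tuples_with_entries W N (i # I) (w # ws)"
      and eq: "x[i := w'] = y[i := w']"
    then have xy: "length x = N" "length y = N" "x ! i = w" "y ! i = w"
      by (auto simp: tuples_with_entries_def tuples_def)
    show "x = y"
    proof (rule nth_equalityI)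
      show "length x = length y" using xy by simp
      fix j assume "j < length x"
      then show "x ! j = y ! j"
        using xy eq by (cases "j = i") (auto simp: list_eq_iff_nth_eq nth_list_update)
    qed
  qed
  show "(\<lambda>rs. rs[i := w']) ` tuples_with_entries W N (i # I) (w # ws)
          \<subseteq> tuples_with_entries W N (i # I) (w' # ws)"
  proof
    fix y assume "y \<in> (\<lambda>rs. rs[i := w']) ` tuples_with_entries W N (i # I) (w # ws)"
    then obtain x where x: "x \<in> tuples_with_entries W N (i # I) (w # ws)" "y = x[i := w']"
      by blast
    have "map ((!) (x[i := w'])) I = map ((!) x) I"
      using assms(3) by (intro map_cong refl) (metis nth_list_update_neq)
    moreover have "set (x[i := w']) \<subseteq> W"
      using x assms(4) set_update_subset_insert[of x i w']
      by (auto simp: tuples_with_entries_def tuples_def)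
    ultimately show "y \<in> tuples_with_entries W N (i # I) (w' # ws)"
      using x assms(2) by (auto simp: tuples_with_entries_def tuples_def)
  qed
  show "finite (tuples_with_entries W N (i # I) (w' # ws))"
    using assms(1) by (simp add: tuples_with_entries_def)
qed

lemma card_tuples_with_entries:
  assumes "finite W" "distinct I" "\<forall>i\<in>set I. i < N" "length ws = length I" "set ws \<subseteq> W"
  shows "card (tuples_with_entries W N I ws) = card W ^ (N - length I)"
  using assms(2-5)
proof (induction I arbitrary: ws)
  case Nil
  then show ?case by (simp add: tuples_with_entries_def card_tuples[OF assms(1)])
next
  case (Cons i I)
  obtain w ws' where ws: "ws = w # ws'" using Cons.prems(3) by (cases ws) auto
  have w: "w \<in> W" and ws': "set ws' \<subseteq> W" "length ws' = length I"
    and i: "i < N" "i \<notin> set I" using Cons.prems ws by auto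
  have same: "card (tuples_with_entries W N (i # I) (w' # ws')) = card (tuples_with_entries W N (i # I) (w # ws'))"
    if "w' \<in> W" for w'
    using card_tuples_with_entries_Cons_le[OF assms(1) i] w that by (meson le_antisym)
  have split: "tuples_with_entries W N I ws' = (\<Union>w'\<in>W. tuples_with_entries W N (i # I) (w' # ws'))"
    by (auto simp: tuples_with_entries_def tuples_def) (use i in auto)
  have "card (tuples_with_entries W N I ws') = (\<Sum>w'\<in>W. card (tuples_with_entries W N (i # I) (w' # ws')))"
    unfolding split by (rule card_UN_disjoint) (auto simp: assms(1) tuples_with_entries_def)
  also have "\<dots> = card W * card (tuples_with_entries W N (i # I) (w # ws'))"
    using same by simp
  finally have "card W * card (tuples_with_entries W N (i # I) (w # ws')) = card W ^ (N - length I)"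
    using Cons ws' by simp
  moreover have "length (i # I) \<le> N"
    using Cons.prems distinct_card[of "i # I"] card_mono[of "{..<N}" "set (i # I)"] by auto
  then have "N - length I = Suc (N - length (i # I))" by simp
  moreover have "card W > 0" using w assms(1) card_gt_0_iff by blast
  ultimately show ?case using ws by simp
qed

text \<open>Entries at distinct positions of a uniform tuple are independent and uniform.\<close>
lemma sum_tuples_entries:
  fixes g :: "'a list \<Rightarrow> real"
  assumes "finite W" "distinct I" "\<forall>i\<in>set I. i < N"
  shows "(\<Sum>rs\<in>tuples W N. g (map (nth rs) I))
           = real (card W ^ (N - length I)) * (\<Sum>ws\<in>tuples W (length I). g ws)"
proof -
  have img: "(\<lambda>rs. map (nth rs) I) ` tuples W N \<subseteq> tuples W (length I)"
    using assms(3) by (auto simp: tuples_def) (meson nth_mem subsetD)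
  have "(\<Sum>rs\<in>tuples W N. g (map (nth rs) I)) =
        (\<Sum>ws\<in>tuples W (length I). \<Sum>rs\<in>{rs \<in> tuples W N. map (nth rs) I = ws}. g (map (nth rs) I))"
    by (rule sum.group[symmetric]) (auto simp: assms(1) img)
  also have "\<dots> = (\<Sum>ws\<in>tuples W (length I). real (card (tuples_with_entries W N I ws)) * g ws)"
    by (intro sum.cong refl) (simp add: tuples_with_entries_def)
  also have "\<dots> = (\<Sum>ws\<in>tuples W (length I). real (card W ^ (N - length I)) * g ws)"
    by (intro sum.cong refl) (subst card_tuples_with_entries, auto simp: assms tuples_def)
  finally show ?thesis by (simp add: sum_distrib_left)
qed

lemma sum_tuples_2_entries:
  fixes g :: "'a \<Rightarrow> 'a \<Rightarrow> real"
  assumes "finite W" "i < N" "j < N" "i \<noteq> j"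
  shows "(\<Sum>rs\<in>tuples W N. g (rs ! i) (rs ! j))
           = real (card W ^ (N - 2)) * (\<Sum>w1\<in>W. \<Sum>w2\<in>W. g w1 w2)"
  using sum_tuples_entries[OF assms(1), of "[i, j]" N "\<lambda>ws. g (ws ! 0) (ws ! 1)"] assms
  by (simp add: numeral_2_eq_2 sum_tuples_Suc tuples_0)

lemma sum_tuples_3_entries:
  fixes g :: "'a \<Rightarrow> 'a \<Rightarrow> 'a \<Rightarrow> real"
  assumes "finite W" "i < N" "j < N" "k < N" "distinct [i, j, k]"
  shows "(\<Sum>rs\<in>tuples W N. g (rs ! i) (rs ! j) (rs ! k))
           = real (card W ^ (N - 3)) * (\<Sum>w1\<in>W. \<Sum>w2\<in>W. \<Sum>w3\<in>W. g w1 w2 w3)"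
  using sum_tuples_entries[OF assms(1) assms(5), of N "\<lambda>ws. g (ws ! 0) (ws ! 1) (ws ! 2)"] assms
  by (simp add: numeral_3_eq_3 sum_tuples_Suc tuples_0)

lemma sum_tuples_4_entries:
  fixes g :: "'a \<Rightarrow> 'a \<Rightarrow> 'a \<Rightarrow> 'a \<Rightarrow> real"
  assumes "finite W" "i < N" "j < N" "k < N" "k' < N" "distinct [i, j, k, k']"
  shows "(\<Sum>rs\<in>tuples W N. g (rs ! i) (rs ! j) (rs ! k) (rs ! k'))
           = real (card W ^ (N - 4)) * (\<Sum>w1\<in>W. \<Sum>w2\<in>W. \<Sum>w3\<in>W. \<Sum>w4\<in>W. g w1 w2 w3 w4)"
  using sum_tuples_entries[OF assms(1) assms(6), of N "\<lambda>ws. g (ws ! 0) (ws ! 1) (ws ! 2) (ws ! 3)"] assms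
  by (simp add: numeral_eq_Suc sum_tuples_Suc tuples_0)

section \<open>The second moment method\<close>

lemma card_zeros_le:
  fixes f :: "'a \<Rightarrow> real"
  assumes "finite A" and "(\<Sum>x\<in>A. (f x)\<^sup>2) \<le> S"
  shows "real (card {x \<in> A. f x = 0}) \<le> real (card A) - (\<Sum>x\<in>A. f x)\<^sup>2 / S"
proof -
  define Z where "Z = real (card {x \<in> A. f x \<noteq> 0})"
  have "(\<Sum>x\<in>A. f x) = (\<Sum>x\<in>A. of_bool (f x \<noteq> 0) * f x)"
    by (intro sum.cong refl) auto
  then have "(\<Sum>x\<in>A. f x)\<^sup>2 \<le> (\<Sum>x\<in>A. (of_bool (f x \<noteq> 0))\<^sup>2) * (\<Sum>x\<in>A. (f x)\<^sup>2)"
    using Cauchy_Schwarz_ineq_sum[of "\<lambda>x. of_bool (f x \<noteq> 0) :: real" f A] by simp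
  also have "(\<Sum>x\<in>A. (of_bool (f x \<noteq> 0) :: real)\<^sup>2) = (\<Sum>x\<in>A. of_bool (f x \<noteq> 0))"
    by (intro sum.cong refl) simp
  also have "\<dots> = Z"
    unfolding Z_def using assms by (simp add: Int_def conj_commute)
  also have "Z * (\<Sum>x\<in>A. (f x)\<^sup>2) \<le> Z * S"
    using assms(2) by (simp add: Z_def mult_left_mono)
  finally have CS: "(\<Sum>x\<in>A. f x)\<^sup>2 \<le> Z * S" .
  have "(\<Sum>x\<in>A. f x)\<^sup>2 / S \<le> Z"
  proof (cases "S > 0")
    case True
    with CS show ?thesis by (simp add: divide_le_eq)
  next
    case False
    then have "(\<Sum>x\<in>A. f x)\<^sup>2 / S \<le> 0" by (simp add: divide_nonneg_nonpos)
    then show ?thesis by (simp add: Z_def)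
  qed
  moreover have "card A = card {x \<in> A. f x = 0} + card {x \<in> A. f x \<noteq> 0}"
  proof -
    have "A = {x \<in> A. f x = 0} \<union> {x \<in> A. f x \<noteq> 0}" by auto
    also have "card \<dots> = card {x \<in> A. f x = 0} + card {x \<in> A. f x \<noteq> 0}"
      by (rule card_Un_disjoint) (use assms in auto)
    finally show ?thesis .
  qed
  ultimately show ?thesis unfolding Z_def by linarith
qed

lemma diff_sq_div_le:
  fixes \<Omega> F A B M :: real
  assumes "0 \<le> A" "0 < B" "0 < F" "0 \<le> \<Omega>" and M: "M\<^sup>2 = \<Omega> * (F * B)"
  shows "\<Omega> - M\<^sup>2 / (F * (A + B)) \<le> \<Omega> * (A / B)"
proof -
  have AB: "A + B > 0" using assms by simp
  have "M\<^sup>2 / (F * (A + B)) = \<Omega> * (B / (A + B))"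
    using assms(3) by (simp add: M)
  moreover have "A / (A + B) + B / (A + B) = 1"
    using AB by (simp add: add_divide_distrib[symmetric])
  ultimately have "\<Omega> - M\<^sup>2 / (F * (A + B)) = \<Omega> * (A / (A + B) + B / (A + B)) - \<Omega> * (B / (A + B))"
    by simp
  also have "\<dots> = \<Omega> * (A / (A + B))"
    by (simp add: distrib_left)
  also have "\<dots> \<le> \<Omega> * (A / B)"
    using assms by (intro mult_left_mono divide_left_mono) auto
  finally show ?thesis .
qed

text \<open>For a relation of bounded degree, the number of arcs between the two halves of a random
  \<open>N\<close>-tuple of elements of \<open>W\<close> has a small second moment, which bounds the probability that
  the tuple spans no arc at all.\<close>
locale bounded_degree_relation =
  fixes W :: "'a set" and adj :: "'a \<Rightarrow> 'a \<Rightarrow> bool" and L :: real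
  assumes finite_W: "finite W"
    and out_degree_le: "\<And>w. w \<in> W \<Longrightarrow> real (card {w' \<in> W. adj w w'}) \<le> L"
    and in_degree_le: "\<And>w'. w' \<in> W \<Longrightarrow> real (card {w \<in> W. adj w w'}) \<le> L"
begin

definition arc_weight :: "'a \<Rightarrow> 'a \<Rightarrow> real" where
  "arc_weight w w' = of_bool (adj w w')"

definition arc_count :: real where
  "arc_count = (\<Sum>w\<in>W. \<Sum>w'\<in>W. arc_weight w w')"

lemma arc_weight_nonneg: "arc_weight w w' \<ge> 0"
  by (simp add: arc_weight_def)

lemma arc_weight_mult_self [simp]: "arc_weight w w' * arc_weight w w' = arc_weight w w'"
  by (simp add: arc_weight_def)

lemma arc_count_nonneg: "arc_count \<ge> 0"
  unfolding arc_count_def by (intro sum_nonneg arc_weight_nonneg)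

lemma sum_arc_weight_out_le: "w \<in> W \<Longrightarrow> (\<Sum>w'\<in>W. arc_weight w w') \<le> L"
  using out_degree_le finite_W by (simp add: arc_weight_def Int_def conj_commute)

lemma sum_arc_weight_in_le: "w' \<in> W \<Longrightarrow> (\<Sum>w\<in>W. arc_weight w w') \<le> L"
  using in_degree_le finite_W by (simp add: arc_weight_def Int_def conj_commute)

lemma degree_bound_nonneg: "W \<noteq> {} \<Longrightarrow> L \<ge> 0"
  using sum_arc_weight_out_le sum_nonneg[of W] arc_weight_nonneg by (meson ex_in_conv order_trans)

lemma sum_tuples_arc:
  assumes "i < N" "j < N" "i \<noteq> j"
  shows "(\<Sum>rs\<in>tuples W N. arc_weight (rs ! i) (rs ! j)) = real (card W) ^ (N - 2) * arc_count"
  using sum_tuples_2_entries[OF finite_W assms] by (simp add: arc_count_def)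

lemma sum_tuples_arcs_common_source_le:
  assumes "i < N" "j < N" "j' < N" "distinct [i, j, j']"
  shows "(\<Sum>rs\<in>tuples W N. arc_weight (rs ! i) (rs ! j) * arc_weight (rs ! i) (rs ! j'))
           \<le> real (card W) ^ (N - 3) * (L * arc_count)"
proof -
  have "(\<Sum>rs\<in>tuples W N. arc_weight (rs ! i) (rs ! j) * arc_weight (rs ! i) (rs ! j'))
      = real (card W) ^ (N - 3) * (\<Sum>w\<in>W. (\<Sum>w'\<in>W. arc_weight w w') * (\<Sum>w''\<in>W. arc_weight w w''))"
    using sum_tuples_3_entries[OF finite_W assms, of "\<lambda>a b c. arc_weight a b * arc_weight a c"]
    by (simp add: sum_product)
  also have "(\<Sum>w\<in>W. (\<Sum>w'\<in>W. arc_weight w w') * (\<Sum>w''\<in>W. arc_weight w w'')) \<le> (\<Sum>w\<in>W. L * (\<Sum>w''\<in>W. arc_weight w w''))"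
    by (intro sum_mono mult_right_mono sum_arc_weight_out_le sum_nonneg arc_weight_nonneg)
  finally show ?thesis
    by (simp add: arc_count_def sum_distrib_left mult_left_mono)
qed

lemma sum_tuples_arcs_common_target_le:
  assumes "i < N" "i' < N" "j < N" "distinct [i, i', j]"
  shows "(\<Sum>rs\<in>tuples W N. arc_weight (rs ! i) (rs ! j) * arc_weight (rs ! i') (rs ! j))
           \<le> real (card W) ^ (N - 3) * (L * arc_count)"
proof -
  have "(\<Sum>rs\<in>tuples W N. arc_weight (rs ! i) (rs ! j) * arc_weight (rs ! i') (rs ! j))
      = real (card W) ^ (N - 3) * (\<Sum>w\<in>W. \<Sum>w'\<in>W. \<Sum>w''\<in>W. arc_weight w w'' * arc_weight w' w'')"
    using sum_tuples_3_entries[OF finite_W assms, of "\<lambda>a b c. arc_weight a c * arc_weight b c"] by simp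
  also have "(\<Sum>w\<in>W. \<Sum>w'\<in>W. \<Sum>w''\<in>W. arc_weight w w'' * arc_weight w' w'')
      = (\<Sum>w\<in>W. \<Sum>w''\<in>W. \<Sum>w'\<in>W. arc_weight w w'' * arc_weight w' w'')"
    by (rule sum.cong[OF refl]) (rule sum.swap)
  also have "\<dots> = (\<Sum>w''\<in>W. \<Sum>w\<in>W. \<Sum>w'\<in>W. arc_weight w w'' * arc_weight w' w'')"
    by (rule sum.swap)
  also have "\<dots> = (\<Sum>w''\<in>W. (\<Sum>w\<in>W. arc_weight w w'') * (\<Sum>w'\<in>W. arc_weight w' w''))"
    by (simp add: sum_product)
  also have "\<dots> \<le> (\<Sum>w''\<in>W. L * (\<Sum>w'\<in>W. arc_weight w' w''))"
    by (intro sum_mono mult_right_mono sum_arc_weight_in_le sum_nonneg arc_weight_nonneg)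
  also have "\<dots> = L * arc_count"
    unfolding arc_count_def sum_distrib_left[symmetric] by (subst sum.swap) (rule refl)
  finally show ?thesis by (simp add: mult_left_mono)
qed

lemma sum_tuples_disjoint_arcs:
  assumes "i < N" "j < N" "i' < N" "j' < N" "distinct [i, j, i', j']"
  shows "(\<Sum>rs\<in>tuples W N. arc_weight (rs ! i) (rs ! j) * arc_weight (rs ! i') (rs ! j'))
           = real (card W) ^ (N - 4) * arc_count\<^sup>2"
proof -
  have "arc_count\<^sup>2 = (\<Sum>w1\<in>W. \<Sum>w2\<in>W. arc_weight w1 w2 * arc_count)"
    unfolding power2_eq_square by (simp add: arc_count_def sum_distrib_right)
  also have "\<dots> = (\<Sum>w1\<in>W. \<Sum>w2\<in>W. \<Sum>w3\<in>W. \<Sum>w4\<in>W. arc_weight w1 w2 * arc_weight w3 w4)"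
    by (simp add: arc_count_def sum_distrib_left)
  finally show ?thesis
    using sum_tuples_4_entries[OF finite_W assms, of "\<lambda>a b c d. arc_weight a b * arc_weight c d"] by simp
qed

lemma degree_bound_mult_arc_count_nonneg: "L * arc_count \<ge> 0"
proof (cases "W = {}")
  case False
  then show ?thesis by (simp add: degree_bound_nonneg arc_count_nonneg)
next
  case True
  have "arc_count = 0" unfolding arc_count_def using True by simp
  then show ?thesis by simp
qed

text \<open>Only pairs \<open>(i, j)\<close> with \<open>i\<close> in the first and \<open>j\<close> in the second half of the tuple
  are counted, so that \<open>i \<noteq> j\<close> always.\<close>
definition cross_arcs :: "nat \<Rightarrow> 'a list \<Rightarrow> real" where
  "cross_arcs N rs = (\<Sum>p\<in>{..<N div 2} \<times> {N div 2..<N}. arc_weight (rs ! fst p) (rs ! snd p))"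

lemma sum_tuples_cross_arcs:
  "(\<Sum>rs\<in>tuples W N. cross_arcs N rs)
     = real (N div 2) * real (N - N div 2) * (real (card W) ^ (N - 2) * arc_count)"
proof -
  have "(\<Sum>rs\<in>tuples W N. cross_arcs N rs)
      = (\<Sum>p\<in>{..<N div 2} \<times> {N div 2..<N}. \<Sum>rs\<in>tuples W N. arc_weight (rs ! fst p) (rs ! snd p))"
    unfolding cross_arcs_def by (rule sum.swap)
  also have "\<dots> = (\<Sum>p\<in>{..<N div 2} \<times> {N div 2..<N}. real (card W) ^ (N - 2) * arc_count)"
    by (intro sum.cong refl sum_tuples_arc) auto
  finally show ?thesis by (simp add: card_cartesian_product)
qed

lemma sum_tuples_cross_arc_pair_le:
  assumes p: "p \<in> {..<N div 2} \<times> {N div 2..<N}" and p': "p' \<in> {..<N div 2} \<times> {N div 2..<N}"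
  shows "(\<Sum>rs\<in>tuples W N. arc_weight (rs ! fst p) (rs ! snd p) * arc_weight (rs ! fst p') (rs ! snd p'))
     \<le> of_bool (p = p') * (real (card W) ^ (N - 2) * arc_count)
       + (of_bool (fst p = fst p') + of_bool (snd p = snd p')) * (real (card W) ^ (N - 3) * (L * arc_count))
       + real (card W) ^ (N - 4) * arc_count\<^sup>2"
    (is "?S \<le> of_bool (p = p') * ?B1 + (?c1 + ?c2) * ?B2 + ?B3")
proof -
  have idx: "fst p < N" "snd p < N" "fst p' < N" "snd p' < N"
    and ne: "fst p \<noteq> snd p" "fst p \<noteq> snd p'" "fst p' \<noteq> snd p" "fst p' \<noteq> snd p'"
    using p p' by auto
  have B: "?B1 \<ge> 0" "?B2 \<ge> 0" "?B3 \<ge> 0"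
    using arc_count_nonneg degree_bound_mult_arc_count_nonneg by simp_all
  consider "p = p'" | "p \<noteq> p'" "fst p = fst p'" | "p \<noteq> p'" "snd p = snd p'"
    | "fst p \<noteq> fst p'" "snd p \<noteq> snd p'"
    by (cases p, cases p') auto
  then show ?thesis
  proof cases
    case 1
    then have "?S = ?B1" using sum_tuples_arc[OF idx(1,2) ne(1)] by simp
    moreover have "of_bool (p = p') * ?B1 + (?c1 + ?c2) * ?B2 + ?B3 = ?B1 + 2 * ?B2 + ?B3"
      using 1 by simp
    ultimately show ?thesis using B by linarith
  next
    case 2
    then have snd: "snd p \<noteq> snd p'" by (cases p, cases p') auto
    then have "?S \<le> ?B2" using sum_tuples_arcs_common_source_le[OF idx(1,2,4)] 2 ne by simp
    moreover have "of_bool (p = p') * ?B1 + (?c1 + ?c2) * ?B2 + ?B3 = ?B2 + ?B3"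
      using 2 snd by simp
    ultimately show ?thesis using B(3) by linarith
  next
    case 3
    then have fst: "fst p \<noteq> fst p'" by (cases p, cases p') auto
    then have "?S \<le> ?B2" using sum_tuples_arcs_common_target_le[OF idx(1,3,2)] 3 ne by simp
    moreover have "of_bool (p = p') * ?B1 + (?c1 + ?c2) * ?B2 + ?B3 = ?B2 + ?B3"
      using 3 fst by simp
    ultimately show ?thesis using B(3) by linarith
  next
    case 4
    then have "?S = ?B3" using sum_tuples_disjoint_arcs[OF idx] ne by simp
    moreover have "of_bool (p = p') * ?B1 + (?c1 + ?c2) * ?B2 + ?B3 = ?B3"
      using 4 by auto
    ultimately show ?thesis by linarith
  qed
qed

lemma sum_tuples_cross_arcs_sq_le:
  "(\<Sum>rs\<in>tuples W N. (cross_arcs N rs)\<^sup>2)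
     \<le> real (N div 2) * real (N - N div 2) *
         (real (card W) ^ (N - 2) * arc_count + real N * (real (card W) ^ (N - 3) * (L * arc_count))
          + real (N div 2) * real (N - N div 2) * (real (card W) ^ (N - 4) * arc_count\<^sup>2))"
proof -
  define h where "h = N div 2"
  define g where "g = N - h"
  define I where "I = {..<h} \<times> {h..<N}"
  define B1 B2 B3 where "B1 = real (card W) ^ (N - 2) * arc_count"
    and "B2 = real (card W) ^ (N - 3) * (L * arc_count)"
    and "B3 = real (card W) ^ (N - 4) * arc_count\<^sup>2"
  have finite_I: "finite I" and card_I: "card I = h * g"
    unfolding I_def g_def by (simp_all add: card_cartesian_product)
  have col: "(\<Sum>p'\<in>I. of_bool (p = p') * B1 + (of_bool (fst p = fst p') + of_bool (snd p = snd p')) * B2 + B3)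
      = B1 + (real g + real h) * B2 + real (h * g) * B3" if p: "p \<in> I" for p
  proof -
    have "I \<inter> {p'. p = p'} = {p}" using p by auto
    then have "(\<Sum>p'\<in>I. of_bool (p = p') :: real) = 1"
      using finite_I by simp
    moreover have "I \<inter> {p'. fst p = fst p'} = {fst p} \<times> {h..<N}"
      and "I \<inter> {p'. snd p = snd p'} = {..<h} \<times> {snd p}"
      using p unfolding I_def by auto
    then have "(\<Sum>p'\<in>I. of_bool (fst p = fst p') :: real) = real g"
      and "(\<Sum>p'\<in>I. of_bool (snd p = snd p') :: real) = real h"
      using finite_I unfolding g_def by (simp_all add: card_cartesian_product)
    ultimately show ?thesis
      using card_I by (simp add: sum.distrib sum_distrib_right[symmetric] distrib_right)
  qed
  have row: "(\<Sum>p\<in>I. \<Sum>p'\<in>I. of_bool (p = p') * B1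
                   + (of_bool (fst p = fst p') + of_bool (snd p = snd p')) * B2 + B3)
      = real (h * g) * (B1 + real N * B2 + real (h * g) * B3)"
  proof -
    have "real g + real h = real N" unfolding g_def h_def by simp
    with col card_I show ?thesis by simp
  qed
  have "(\<Sum>rs\<in>tuples W N. (cross_arcs N rs)\<^sup>2)
      = (\<Sum>rs\<in>tuples W N. \<Sum>p\<in>I. \<Sum>p'\<in>I.
           arc_weight (rs ! fst p) (rs ! snd p) * arc_weight (rs ! fst p') (rs ! snd p'))"
    unfolding cross_arcs_def I_def h_def power2_eq_square by (simp add: sum_product)
  also have "\<dots> = (\<Sum>p\<in>I. \<Sum>p'\<in>I. \<Sum>rs\<in>tuples W N.
           arc_weight (rs ! fst p) (rs ! snd p) * arc_weight (rs ! fst p') (rs ! snd p'))"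
    by (subst sum.swap) (rule sum.cong[OF refl], rule sum.swap)
  also have "\<dots> \<le> (\<Sum>p\<in>I. \<Sum>p'\<in>I. of_bool (p = p') * B1
                   + (of_bool (fst p = fst p') + of_bool (snd p = snd p')) * B2 + B3)"
    unfolding B1_def B2_def B3_def I_def h_def
    by (intro sum_mono sum_tuples_cross_arc_pair_le)
  finally show ?thesis
    unfolding row by (simp add: B1_def B2_def B3_def g_def h_def)
qed

lemma card_tuples_without_arc_le:
  assumes N: "N \<ge> 4" and arcs: "arc_count > 0"
  shows "real (card {rs \<in> tuples W N. \<forall>i<N. \<forall>j<N. \<not> adj (rs ! i) (rs ! j)})
     \<le> ((real (card W))\<^sup>2 + real N * real (card W) * L)
          / (real (N div 2) * real (N - N div 2) * arc_count) * real (card (tuples W N))"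
proof -
  define K F c where "K = real (card W)" and "F = K ^ (N - 4)"
    and "c = real (N div 2) * real (N - N div 2)"
  define A B where "A = c * arc_count * (K\<^sup>2 + real N * K * L)" and "B = (c * arc_count)\<^sup>2"
  have "W \<noteq> {}" using arcs unfolding arc_count_def by auto
  then have K: "K > 0" unfolding K_def using finite_W by (simp add: card_gt_0_iff)
  have c: "c > 0" unfolding c_def using N by simp
  have A: "A \<ge> 0"
    unfolding A_def using c K arcs degree_bound_nonneg[OF \<open>W \<noteq> {}\<close>] by simp
  have B: "B > 0" unfolding B_def using c arcs by simp
  obtain M where M: "N = M + 4" using N by (metis add.commute le_add_diff_inverse)
  have pow: "K ^ (N - 2) = F * K\<^sup>2" "K ^ (N - 3) = F * K" "K ^ N = F * K ^ 4"
    unfolding F_def M by (simp_all add: power_add power2_eq_square)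
  have card_tuples_eq: "real (card (tuples W N)) = F * K ^ 4"
    using card_tuples[OF finite_W] pow(3) unfolding K_def by simp
  have S1: "(\<Sum>rs\<in>tuples W N. cross_arcs N rs) = F * K ^ 2 * (c * arc_count)"
    using sum_tuples_cross_arcs pow(1) unfolding K_def c_def by simp
  have "(\<Sum>rs\<in>tuples W N. (cross_arcs N rs)\<^sup>2)
      \<le> c * (F * K\<^sup>2 * arc_count + real N * (F * K * (L * arc_count)) + c * (F * arc_count\<^sup>2))"
    using sum_tuples_cross_arcs_sq_le[of N] pow(1,2) unfolding c_def K_def F_def by simp
  also have "\<dots> = F * (A + B)"
    unfolding A_def B_def by (simp add: algebra_simps power2_eq_square)
  finally have S2: "(\<Sum>rs\<in>tuples W N. (cross_arcs N rs)\<^sup>2) \<le> F * (A + B)" .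
  have "{rs \<in> tuples W N. \<forall>i<N. \<forall>j<N. \<not> adj (rs ! i) (rs ! j)}
      \<subseteq> {rs \<in> tuples W N. cross_arcs N rs = 0}"
    by (auto simp: cross_arcs_def arc_weight_def intro!: sum.neutral)
  then have "real (card {rs \<in> tuples W N. \<forall>i<N. \<forall>j<N. \<not> adj (rs ! i) (rs ! j)})
      \<le> real (card {rs \<in> tuples W N. cross_arcs N rs = 0})"
    using finite_W by (simp add: card_mono)
  also have "\<dots> \<le> F * K ^ 4 - (F * K ^ 2 * (c * arc_count))\<^sup>2 / (F * (A + B))"
    using card_zeros_le[OF finite_tuples[OF finite_W] S2] S1 card_tuples_eq by simp
  also have "\<dots> \<le> F * K ^ 4 * (A / B)"
  proof (rule diff_sq_div_le)
    show "(F * K ^ 2 * (c * arc_count))\<^sup>2 = F * K ^ 4 * (F * B)"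
      unfolding B_def by (simp add: power2_eq_square power4_eq_xxxx mult_ac)
  qed (use A B K in \<open>simp_all add: F_def\<close>)
  also have "A / B = (K\<^sup>2 + real N * K * L) / (c * arc_count)"
    using c arcs unfolding A_def B_def by (simp add: power2_eq_square)
  finally show ?thesis
    using card_tuples_eq unfolding K_def c_def by (simp add: mult.commute)
qed

end

section \<open>Words differing in a single letter\<close>

definition letter_swap :: "'a \<Rightarrow> 'a \<Rightarrow> 'a list \<Rightarrow> 'a list \<Rightarrow> bool" where
  "letter_swap c d w w' \<longleftrightarrow> (\<exists>u v. w = u @ [c] @ v \<and> w' = u @ [d] @ v)"

lemma card_letter_swap_out_le: "card {w' \<in> W. letter_swap c d w w'} \<le> length w"
proof -
  have "{w' \<in> W. letter_swap c d w w'} \<subseteq> (\<lambda>p. w[p := d]) ` {..<length w}"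
  proof
    fix w' assume "w' \<in> {w' \<in> W. letter_swap c d w w'}"
    then obtain u v where "w = u @ [c] @ v" "w' = u @ [d] @ v"
      unfolding letter_swap_def by blast
    then show "w' \<in> (\<lambda>p. w[p := d]) ` {..<length w}"
      by (intro image_eqI[of _ _ "length u"]) (simp_all add: list_update_append)
  qed
  then have "card {w' \<in> W. letter_swap c d w w'} \<le> card ((\<lambda>p. w[p := d]) ` {..<length w})"
    by (rule card_mono[rotated]) simp
  also have "\<dots> \<le> length w"
    using card_image_le[of "{..<length w}"] by simp
  finally show ?thesis .
qed

lemma card_letter_swap_in_le: "card {w \<in> W. letter_swap c d w w'} \<le> length w'"
proof -
  have "{w \<in> W. letter_swap c d w w'} \<subseteq> (\<lambda>p. w'[p := c]) ` {..<length w'}"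
  proof
    fix w assume "w \<in> {w \<in> W. letter_swap c d w w'}"
    then obtain u v where "w = u @ [c] @ v" "w' = u @ [d] @ v"
      unfolding letter_swap_def by blast
    then show "w \<in> (\<lambda>p. w'[p := c]) ` {..<length w'}"
      by (intro image_eqI[of _ _ "length u"]) (simp_all add: list_update_append)
  qed
  then have "card {w \<in> W. letter_swap c d w w'} \<le> card ((\<lambda>p. w'[p := c]) ` {..<length w'})"
    by (rule card_mono[rotated]) simp
  also have "\<dots> \<le> length w'"
    using card_image_le[of "{..<length w'}"] by simp
  finally show ?thesis .
qed

lemma bounded_degree_relation_letter_swap:
  "bounded_degree_relation (reduced_words m l) (letter_swap c d) (real l)"
proof
  show "real (card {w' \<in> reduced_words m l. letter_swap c d w w'}) \<le> real l"
    if "w \<in> reduced_words m l" for w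
    using card_letter_swap_out_le[of "reduced_words m l" c d w] that
    by (simp add: reduced_words_def)
  show "real (card {w \<in> reduced_words m l. letter_swap c d w w'}) \<le> real l"
    if "w' \<in> reduced_words m l" for w'
    using card_letter_swap_in_le[of "reduced_words m l" c d w'] that
    by (simp add: reduced_words_def)
qed simp

lemma append_letter_in_reduced_words:
  assumes u: "u \<in> reduced_words m p" and v: "v \<in> reduced_words m n" and e: "e \<in> letters m"
    and "last u \<noteq> inv_letter e" and "hd v \<noteq> inv_letter e"
  shows "u @ [e] @ v \<in> reduced_words m (p + 1 + n)"
proof -
  have "e \<noteq> inv_letter (last u)" using assms(4) by (auto simp: inv_letter_eq_iff)
  then have "freely_reduced (u @ [e])"
    using u by (simp add: freely_reduced_snoc_iff reduced_words_def)
  moreover have "freely_reduced (e # v)"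
    using v assms(5) by (simp add: freely_reduced_Cons_iff reduced_words_def)
  ultimately have "freely_reduced (u @ e # v)"
    using freely_reduced_append_Cons_iff[of u e v] by blast
  with u v e show ?thesis by (auto simp: reduced_words_def)
qed

lemma card_insert_letter_pairs_ge:
  assumes m: "m \<ge> 2" and E: "finite E" "card E \<le> 2"
  shows "(2 * m - 1) ^ (a + b)
           \<le> card ((\<lambda>(u, v). (u @ [c] @ v, u @ [d] @ v)) `
                 ({u \<in> reduced_words m (Suc a). last u \<notin> E} \<times> {v \<in> reduced_words m (Suc b). hd v \<notin> E}))"
    (is "_ \<le> card (?F ` (?U \<times> ?V))")
proof -
  have "inj_on ?F (?U \<times> ?V)"
  proof (rule inj_onI)
    fix x y assume xy: "x \<in> ?U \<times> ?V" "y \<in> ?U \<times> ?V" and eq: "?F x = ?F y"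
    obtain u v u' v' where uv: "x = (u, v)" "y = (u', v')" by (cases x, cases y) blast
    have "length u = length u'" using xy uv by (simp add: reduced_words_def)
    moreover have "u @ [c] @ v = u' @ [c] @ v'" using eq uv by simp
    ultimately show "x = y" using uv by simp
  qed
  then have "card (?F ` (?U \<times> ?V)) = card ?U * card ?V"
    by (simp add: card_image card_cartesian_product)
  moreover have "(2 * m - 1) ^ a * (2 * m - 1) ^ b \<le> card ?U * card ?V"
    using card_reduced_words_avoiding_ge[OF m E] by (intro mult_le_mono)
  ultimately show ?thesis by (simp add: power_add)
qed

text \<open>Inserting \<open>c\<close> or \<open>d\<close> between reduced words \<open>u\<close> of length \<open>p\<close> and \<open>v\<close> of length
  \<open>l - 1 - p\<close> gives such a pair as soon as neither junction cancels; the position \<open>p\<close> of the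
  swapped letter distinguishes the pairs obtained for different \<open>p\<close>.\<close>
lemma card_letter_swap_pairs_ge:
  assumes m: "m \<ge> 2" and l: "l \<ge> 3"
    and cd: "c \<in> letters m" "d \<in> letters m" "c \<noteq> d"
  shows "(l - 2) * (2 * m - 1) ^ (l - 3)
           \<le> card {(w, w') \<in> reduced_words m l \<times> reduced_words m l. letter_swap c d w w'}"
proof -
  define E where "E = {inv_letter c, inv_letter d}"
  define U where "U p = {u \<in> reduced_words m p. last u \<notin> E}" for p
  define V where "V n = {v \<in> reduced_words m n. hd v \<notin> E}" for n
  define F where "F = (\<lambda>(u, v). (u @ [c] @ v, u @ [d] @ v))"
  define Im where "Im p = F ` (U p \<times> V (l - 1 - p))" for p
  define Pairs where "Pairs = {(w, w') \<in> reduced_words m l \<times> reduced_words m l. letter_swap c d w w'}"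
  have E: "finite E" "card E \<le> 2" unfolding E_def by (simp_all add: card_insert_if)
  have finite_Pairs: "finite Pairs"
    by (rule finite_subset[of _ "reduced_words m l \<times> reduced_words m l"]) (auto simp: Pairs_def)
  have sub: "Im p \<subseteq> Pairs" if p: "1 \<le> p" "p \<le> l - 2" for p
  proof
    fix x assume "x \<in> Im p"
    then obtain u v where u: "u \<in> reduced_words m p" "last u \<notin> E"
      and v: "v \<in> reduced_words m (l - 1 - p)" "hd v \<notin> E" and x: "x = F (u, v)"
      unfolding Im_def U_def V_def by blast
    have "u @ [e] @ v \<in> reduced_words m l" if e: "e \<in> {c, d}" for e
    proof -
      have "inv_letter e \<in> E" using e by (auto simp: E_def)
      then have "last u \<noteq> inv_letter e" "hd v \<noteq> inv_letter e" using u(2) v(2) by auto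
      moreover have "e \<in> letters m" using e cd by auto
      moreover have "p + 1 + (l - 1 - p) = l" using p l by simp
      ultimately show ?thesis using append_letter_in_reduced_words[OF u(1) v(1), of e] by simp
    qed
    moreover have "letter_swap c d (u @ [c] @ v) (u @ [d] @ v)"
      unfolding letter_swap_def by blast
    ultimately show "x \<in> Pairs" by (simp add: Pairs_def x F_def)
  qed
  have swapped_at: "fst x ! q \<noteq> snd x ! q \<longleftrightarrow> q = p" if "x \<in> Im p" for x p q
  proof -
    from that obtain u v where u: "u \<in> U p" and x: "x = F (u, v)" unfolding Im_def by auto
    have "length u = p" using u by (simp add: U_def reduced_words_def)
    then show ?thesis
      using cd(3) by (auto simp: x F_def nth_append nth_Cons')
  qed
  have disj: "Im p \<inter> Im p' = {}" if "p \<noteq> p'" for p p'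
    using swapped_at that by blast
  have "(l - 2) * (2 * m - 1) ^ (l - 3) = (\<Sum>p\<in>{1..l-2}. (2 * m - 1) ^ (l - 3))"
    by simp
  also have "\<dots> \<le> (\<Sum>p\<in>{1..l-2}. card (Im p))"
  proof (rule sum_mono)
    fix p assume p: "p \<in> {1..l-2}"
    define a b where "a = p - 1" and "b = l - 2 - p"
    have ab: "p = Suc a" "l - 1 - Suc a = Suc b" "l - 3 = a + b"
      using p l unfolding a_def b_def by auto
    show "(2 * m - 1) ^ (l - 3) \<le> card (Im p)"
      unfolding Im_def U_def V_def F_def ab by (rule card_insert_letter_pairs_ge[OF m E])
  qed
  also have "\<dots> = card (\<Union>p\<in>{1..l-2}. Im p)"
    by (rule card_UN_disjoint[symmetric]) (auto intro: finite_subset[OF sub finite_Pairs] simp: disj)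
  also have "\<dots> \<le> card Pairs"
    by (intro card_mono[OF finite_Pairs] UN_least sub) auto
  finally show ?thesis unfolding Pairs_def .
qed

section \<open>Probability that all generators collapse\<close>

lemma arc_count_letter_swap:
  "bounded_degree_relation.arc_count (reduced_words m l) (letter_swap c d)
     = real (card {(w, w') \<in> reduced_words m l \<times> reduced_words m l. letter_swap c d w w'})"
proof -
  have "{(w, w') \<in> reduced_words m l \<times> reduced_words m l. letter_swap c d w w'}
      = Sigma (reduced_words m l) (\<lambda>w. {w' \<in> reduced_words m l. letter_swap c d w w'})"
    by auto
  then show ?thesis
    by (simp add: bounded_degree_relation.arc_count_def[OF bounded_degree_relation_letter_swap]
        bounded_degree_relation.arc_weight_def[OF bounded_degree_relation_letter_swap]
        card_SigmaI Int_def conj_commute)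
qed

lemma cross_pairs_ge: "N \<ge> 2 \<Longrightarrow> (real N)\<^sup>2 / 8 \<le> real (N div 2) * real (N - N div 2)"
proof -
  assume "N \<ge> 2"
  then have "real N / 4 \<le> real (N div 2)" "real N / 2 \<le> real (N - N div 2)" by linarith+
  then have "real N / 4 * (real N / 2) \<le> real (N div 2) * real (N - N div 2)"
    by (intro mult_mono) auto
  then show ?thesis by (simp add: power2_eq_square)
qed

definition swap_failure_bound :: "real \<Rightarrow> nat \<Rightarrow> nat \<Rightarrow> real" where
  "swap_failure_bound q N l =
     32 * q ^ 3 * q ^ l / ((real N)\<^sup>2 * (real l - 2)) + 16 * q ^ 3 * real l / (real N * (real l - 2))"

lemma ratio_le_swap_failure_bound:
  fixes q K T :: real and N l :: nat
  assumes q: "q > 0" and l: "l \<ge> 3" and N: "N \<ge> 2"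
    and K: "0 \<le> K" "K \<le> 2 * q ^ l" and T: "(real l - 2) * q ^ (l - 3) \<le> T"
  shows "(K\<^sup>2 + real N * K * real l) / (real (N div 2) * real (N - N div 2) * T)
           \<le> swap_failure_bound q N l"
proof -
  obtain r where r: "l = r + 3" using l by (metis add.commute le_add_diff_inverse)
  have pos: "real N > 0" "real l - 2 > 0" "q ^ r > 0" using N l q by auto
  have "K\<^sup>2 + real N * K * real l \<le> (2 * q ^ l)\<^sup>2 + real N * (2 * q ^ l) * real l"
    using K by (intro add_mono power_mono mult_right_mono mult_left_mono) auto
  moreover have "(real N)\<^sup>2 / 8 * ((real l - 2) * q ^ r)
      \<le> real (N div 2) * real (N - N div 2) * T"
    using cross_pairs_ge[OF N] T pos r by (intro mult_mono) auto
  ultimately have "(K\<^sup>2 + real N * K * real l) / (real (N div 2) * real (N - N div 2) * T)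
      \<le> ((2 * q ^ l)\<^sup>2 + real N * (2 * q ^ l) * real l) / ((real N)\<^sup>2 / 8 * ((real l - 2) * q ^ r))"
    using pos K by (intro frac_le) auto
  also have "\<dots> = swap_failure_bound q N l"
  proof -
    define L2 n where "L2 = real l - 2" and "n = real N"
    have ql: "q ^ l = q ^ 3 * q ^ r" by (simp add: r power_add)
    have "(2 * q ^ l)\<^sup>2 + n * (2 * q ^ l) * real l
        = 4 * q ^ l * (q ^ 3 * q ^ r) + 2 * n * real l * (q ^ 3 * q ^ r)"
      by (simp add: ql power2_eq_square algebra_simps)
    moreover have "L2 \<noteq> 0" "n \<noteq> 0" "q ^ r \<noteq> 0"
      using pos q unfolding L2_def n_def by simp_all
    ultimately show ?thesis
      unfolding swap_failure_bound_def L2_def[symmetric] n_def[symmetric]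
      by (simp add: field_simps power2_eq_square)
  qed
  finally show ?thesis .
qed

lemma card_tuples_without_letter_swap_le:
  assumes m: "m \<ge> 2" and l: "l \<ge> 3" and N: "N \<ge> 4"
    and cd: "c \<in> letters m" "d \<in> letters m" "c \<noteq> d"
  shows "real (card {rs \<in> tuples (reduced_words m l) N. \<forall>i<N. \<forall>j<N. \<not> letter_swap c d (rs ! i) (rs ! j)})
     \<le> swap_failure_bound (real (2 * m - 1)) N l * real (card (tuples (reduced_words m l) N))"
proof -
  interpret bounded_degree_relation "reduced_words m l" "letter_swap c d" "real l"
    by (rule bounded_degree_relation_letter_swap)
  define q where "q = real (2 * m - 1)"
  have q: "q \<ge> 3" unfolding q_def using m by simp
  have T: "(real l - 2) * q ^ (l - 3) \<le> arc_count"
  proof -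
    have "real ((l - 2) * (2 * m - 1) ^ (l - 3)) \<le> arc_count"
      unfolding arc_count_letter_swap using card_letter_swap_pairs_ge[OF m l cd] of_nat_le_iff by blast
    then show ?thesis using l unfolding q_def by (simp add: of_nat_diff)
  qed
  have "(real l - 2) * q ^ (l - 3) > 0" using l q by simp
  with T have T_pos: "arc_count > 0" by linarith
  have "card (reduced_words m l) \<le> 2 * (2 * m - 1) ^ l"
    using card_reduced_words_le[of m l] m by simp
  then have "real (card (reduced_words m l)) \<le> real (2 * (2 * m - 1) ^ l)"
    by (rule of_nat_mono)
  then have K: "real (card (reduced_words m l)) \<le> 2 * q ^ l"
    unfolding q_def by simp
  have "real (card {rs \<in> tuples (reduced_words m l) N. \<forall>i<N. \<forall>j<N. \<not> letter_swap c d (rs ! i) (rs ! j)})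
     \<le> ((real (card (reduced_words m l)))\<^sup>2 + real N * real (card (reduced_words m l)) * real l)
          / (real (N div 2) * real (N - N div 2) * arc_count) * real (card (tuples (reduced_words m l) N))"
    by (rule card_tuples_without_arc_le[OF N T_pos])
  also have "\<dots> \<le> swap_failure_bound q N l * real (card (tuples (reduced_words m l) N))"
    using q N by (intro mult_right_mono ratio_le_swap_failure_bound[OF _ l _ _ K T]) auto
  finally show ?thesis unfolding q_def .
qed

lemma presented_group_trivial_or_Z2_of_swaps:
  assumes a: "a \<in> letters m"
    and swaps: "\<And>x. x \<in> letters m \<Longrightarrow> x \<noteq> a \<Longrightarrow>
                  \<exists>i<length rs. \<exists>j<length rs. letter_swap x a (rs ! i) (rs ! j)"
  shows "presented_group m (set rs) \<cong> singleton_group () \<or> presented_group m (set rs) \<cong> Z2_group"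
proof (rule presented_group_trivial_or_Z2[OF a])
  fix x assume x: "x \<in> letters m"
  show "([x], [a]) \<in> word_equiv (set rs)"
  proof (cases "x = a")
    case False
    then obtain i j where ij: "i < length rs" "j < length rs" "letter_swap x a (rs ! i) (rs ! j)"
      using swaps x by blast
    then obtain u v where "rs ! i = u @ [x] @ v" "rs ! j = u @ [a] @ v"
      unfolding letter_swap_def by blast
    with nth_mem[OF ij(1)] nth_mem[OF ij(2)] show ?thesis
      by (intro letter_equiv_of_relators[of u x v _ a]) simp_all
  qed simp
qed

lemma relator_tuples_eq: "relator_tuples m f l = tuples (reduced_words m l) (num_relators m f l)"
  unfolding relator_tuples_def tuples_def by auto

lemma prob_H_le_1: "prob_H m f l P \<le> 1"
proof -
  have "card {rs \<in> relator_tuples m f l. P (presented_group m (set rs))} \<le> card (relator_tuples m f l)"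
    by (rule card_mono) (auto simp: relator_tuples_eq)
  then show ?thesis
    unfolding prob_H_def by (cases "card (relator_tuples m f l) = 0") (auto simp: divide_le_eq_1)
qed

lemma card_Diff_UN_ge:
  assumes "finite \<Omega>" and "finite I" and "\<And>x. x \<in> I \<Longrightarrow> B x \<subseteq> \<Omega>"
  shows "real (card \<Omega>) - (\<Sum>x\<in>I. real (card (B x))) \<le> real (card (\<Omega> - (\<Union>x\<in>I. B x)))"
proof -
  have sub: "(\<Union>x\<in>I. B x) \<subseteq> \<Omega>" using assms(3) by blast
  then have "finite (\<Union>x\<in>I. B x)" using assms(1) by (rule finite_subset)
  then have "real (card (\<Omega> - (\<Union>x\<in>I. B x))) = real (card \<Omega>) - real (card (\<Union>x\<in>I. B x))"
    using sub card_mono[OF assms(1) sub] by (simp add: card_Diff_subset of_nat_diff)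
  moreover have "real (card (\<Union>x\<in>I. B x)) \<le> (\<Sum>x\<in>I. real (card (B x)))"
    using card_UN_le[OF assms(2), of B] by (simp flip: of_nat_sum)
  ultimately show ?thesis by linarith
qed

text \<open>Union bound over the letters \<open>x \<noteq> a\<^sub>0\<close>, where \<open>a\<^sub>0\<close> is the first generator: the bad
  event for \<open>x\<close> is that no two relators differ by \<open>x \<mapsto> a\<^sub>0\<close>.\<close>
lemma prob_H_trivial_or_Z2_ge:
  assumes m: "m \<ge> 2" and l: "l \<ge> 3" and N: "num_relators m f l \<ge> 4"
  shows "1 - real (2 * m) * swap_failure_bound (real (2 * m - 1)) (num_relators m f l) l
           \<le> prob_H m f l (\<lambda>G. G \<cong> singleton_group () \<or> G \<cong> Z2_group)"
proof -
  define a :: letter where "a = (0, False)"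
  define \<Omega> where "\<Omega> = tuples (reduced_words m l) (num_relators m f l)"
  define B where "B = swap_failure_bound (real (2 * m - 1)) (num_relators m f l) l"
  define Bad where "Bad x = {rs \<in> \<Omega>. \<forall>i<num_relators m f l. \<forall>j<num_relators m f l.
                              \<not> letter_swap x a (rs ! i) (rs ! j)}" for x
  define Good where "Good = {rs \<in> \<Omega>. presented_group m (set rs) \<cong> singleton_group ()
                              \<or> presented_group m (set rs) \<cong> Z2_group}"
  have a: "a \<in> letters m" using m by (simp add: a_def letters_def)
  have "(2 * m - 1) ^ l \<ge> 1" using m by simp
  then have "card \<Omega> > 0"
    using card_reduced_words_ge[of m l] unfolding \<Omega>_def by (simp add: card_tuples)
  have "\<Omega> - (\<Union>x\<in>letters m - {a}. Bad x) \<subseteq> Good"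
  proof
    fix rs assume rs: "rs \<in> \<Omega> - (\<Union>x\<in>letters m - {a}. Bad x)"
    then have "length rs = num_relators m f l" by (simp add: \<Omega>_def tuples_def)
    with rs have "presented_group m (set rs) \<cong> singleton_group () \<or> presented_group m (set rs) \<cong> Z2_group"
      by (intro presented_group_trivial_or_Z2_of_swaps[OF a]) (auto simp: Bad_def)
    with rs show "rs \<in> Good" by (simp add: Good_def)
  qed
  have finite_\<Omega>: "finite \<Omega>" unfolding \<Omega>_def by simp
  have "real (card \<Omega>) - (\<Sum>x\<in>letters m - {a}. real (card (Bad x)))
      \<le> real (card (\<Omega> - (\<Union>x\<in>letters m - {a}. Bad x)))"
    by (rule card_Diff_UN_ge[OF finite_\<Omega>]) (auto simp: Bad_def)
  also have "\<dots> \<le> real (card Good)"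
    using finite_\<Omega> \<open>\<Omega> - (\<Union>x\<in>letters m - {a}. Bad x) \<subseteq> Good\<close>
    by (simp add: card_mono Good_def)
  finally have "real (card \<Omega>) - (\<Sum>x\<in>letters m - {a}. real (card (Bad x))) \<le> real (card Good)" .
  moreover have "(\<Sum>x\<in>letters m - {a}. real (card (Bad x))) \<le> real (2 * m) * (B * real (card \<Omega>))"
  proof -
    have "(\<Sum>x\<in>letters m - {a}. real (card (Bad x))) \<le> (\<Sum>x\<in>letters m - {a}. B * real (card \<Omega>))"
      unfolding Bad_def \<Omega>_def B_def
      by (intro sum_mono card_tuples_without_letter_swap_le[OF m l N] a) auto
    also have "\<dots> = real (card (letters m - {a})) * (B * real (card \<Omega>))"
      by simp
    also have "\<dots> \<le> real (2 * m) * (B * real (card \<Omega>))"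
      using l card_Diff1_le[of "letters m" a]
      by (intro mult_right_mono) (simp_all add: card_letters B_def swap_failure_bound_def)
    finally show ?thesis .
  qed
  ultimately have "real (card \<Omega>) * (1 - real (2 * m) * B) \<le> real (card Good)"
    by (simp add: algebra_simps)
  then show ?thesis
    using \<open>card \<Omega> > 0\<close>
    unfolding prob_H_def relator_tuples_eq \<Omega>_def[symmetric] B_def[symmetric] Good_def
    by (simp add: le_divide_eq mult.commute)
qed

section \<open>Asymptotics\<close>

lemma num_relators_ge:
  assumes "m \<ge> 1"
  shows "(2 * real m - 1) powr (real l * (1/2 - f l)) - 1 \<le> real (num_relators m f l)"
proof -
  let ?s = "(2 * real m - 1) powr (real l * (1/2 - f l))"
  have "\<lfloor>?s\<rfloor> \<ge> 0" by simp
  then have "real (num_relators m f l) = real_of_int \<lfloor>?s\<rfloor>"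
    unfolding num_relators_def by simp
  then show ?thesis using real_of_int_floor_gt_diff_one[of ?s] by linarith
qed

lemma relator_exponent_at_top:
  assumes m: "m \<ge> 2" and f: "f \<longlonglongrightarrow> 0"
  shows "filterlim (\<lambda>l. (2 * real m - 1) powr (real l * (1/2 - f l))) at_top sequentially"
proof -
  define q where "q = 2 * real m - 1"
  have q: "q \<ge> 3" unfolding q_def using m by simp
  have "eventually (\<lambda>l. dist (f l) 0 < 1/4) sequentially"
    by (rule tendstoD[OF f]) simp
  then have "eventually (\<lambda>l. 3 powr (real l / 4) \<le> q powr (real l * (1/2 - f l))) sequentially"
  proof (rule eventually_mono)
    fix l assume "dist (f l) 0 < 1/4"
    then have "real l * (1/4) \<le> real l * (1/2 - f l)"
      by (intro mult_left_mono) (auto simp: dist_real_def)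
    then have "q powr (real l / 4) \<le> q powr (real l * (1/2 - f l))"
      using q by (intro powr_mono) auto
    moreover have "3 powr (real l / 4) \<le> q powr (real l / 4)"
      using q by (intro powr_mono2) auto
    ultimately show "3 powr (real l / 4) \<le> q powr (real l * (1/2 - f l))"
      by linarith
  qed
  moreover have "filterlim (\<lambda>l::nat. (3::real) powr (real l / 4)) at_top sequentially"
    by real_asymp
  ultimately show ?thesis unfolding q_def by (rule filterlim_at_top_mono[rotated])
qed

lemma num_relators_at_top:
  assumes m: "m \<ge> 2" and f: "f \<longlonglongrightarrow> 0"
  shows "filterlim (\<lambda>l. real (num_relators m f l)) at_top sequentially"
proof (rule filterlim_at_top_mono)
  show "filterlim (\<lambda>l. - 1 + (2 * real m - 1) powr (real l * (1/2 - f l))) at_top sequentially"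
    by (rule filterlim_tendsto_add_at_top[OF tendsto_const relator_exponent_at_top[OF m f]])
  show "eventually (\<lambda>l. - 1 + (2 * real m - 1) powr (real l * (1/2 - f l))
                        \<le> real (num_relators m f l)) sequentially"
    using num_relators_ge[of m] m by simp
qed

text \<open>With \<open>N \<ge> s - 1 \<ge> s/2\<close> for \<open>s = q\<^bsup>x(1/2 - F)\<^esup>\<close>, the ratio \<open>q\<^sup>x/N\<^sup>2\<close> is at most
  \<open>4 q\<^bsup>2xF\<^esup> \<le> 4 q\<^sup>k\<close>, and \<open>q\<^sup>k \<le> \<surd>(x - 2)\<close> by the growth condition on \<open>k\<close>.\<close>
lemma powr_div_sq_le:
  fixes q x F Nr :: real and k :: nat
  assumes q: "q \<ge> 1" and kF: "2 * x * F \<le> real k"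
    and growth: "(2 * real k + 2) * q ^ (2 * k) \<le> x - 2"
    and s: "q powr (x * (1/2 - F)) \<ge> 2" and Nr: "Nr \<ge> q powr (x * (1/2 - F)) - 1"
  shows "q powr x / Nr\<^sup>2 \<le> 4 * sqrt (x - 2)"
proof -
  define s where "s = q powr (x * (1/2 - F))"
  have "s\<^sup>2 / 4 \<le> Nr\<^sup>2"
  proof -
    have "s / 2 \<le> Nr" using s Nr unfolding s_def by linarith
    then have "(s / 2)\<^sup>2 \<le> Nr\<^sup>2" using s unfolding s_def by (intro power_mono) auto
    then show ?thesis by (simp add: power_divide)
  qed
  have "s\<^sup>2 = q powr (x * (1 - 2 * F))"
    unfolding s_def power2_eq_square by (simp add: powr_add[symmetric] algebra_simps)
  then have "q powr x / s\<^sup>2 = q powr (2 * x * F)"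
    by (simp add: powr_diff[symmetric] algebra_simps)
  also have "\<dots> \<le> q powr (real k)" using kF q by (intro powr_mono) auto
  also have "\<dots> = q ^ k" using q by (simp add: powr_realpow)
  also have "q ^ k \<le> sqrt (x - 2)"
  proof (rule real_le_rsqrt)
    have "(q ^ k)\<^sup>2 = q ^ (2 * k)" by (simp add: power_mult[symmetric] mult.commute)
    also have "\<dots> \<le> (2 * real k + 2) * q ^ (2 * k)" using q by simp
    finally show "(q ^ k)\<^sup>2 \<le> x - 2" using growth by linarith
  qed
  finally have "q powr x / s\<^sup>2 \<le> sqrt (x - 2)" .
  moreover have "q powr x / Nr\<^sup>2 \<le> 4 * (q powr x / s\<^sup>2)"
  proof -
    have "s\<^sup>2 / 4 > 0" using s q unfolding s_def by simp
    moreover from this have "Nr\<^sup>2 > 0" using \<open>s\<^sup>2 / 4 \<le> Nr\<^sup>2\<close> by linarith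
    ultimately have "q powr x / Nr\<^sup>2 \<le> q powr x / (s\<^sup>2 / 4)"
      using \<open>s\<^sup>2 / 4 \<le> Nr\<^sup>2\<close> by (intro divide_left_mono mult_pos_pos) simp_all
    then show ?thesis by (simp add: mult.commute)
  qed
  ultimately show ?thesis by linarith
qed

lemma eventually_powr_div_num_relators_sq_le:
  assumes m: "m \<ge> 2" and f: "f \<longlonglongrightarrow> 0"
    and k: "filterlim (\<lambda>l. real (k l) - 2 * real l * f l) at_top sequentially"
    and growth: "filterlim (\<lambda>l. (real l - 2) / ((2 * real (k l) + 2) * (2 * real m - 1) ^ (2 * k l)))
                   at_top sequentially"
  shows "eventually (\<lambda>l. (2 * real m - 1) powr real l / (real (num_relators m f l))\<^sup>2
                        \<le> 4 * sqrt (real l - 2)) sequentially"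
proof -
  define q where "q = 2 * real m - 1"
  have q: "q \<ge> 1" unfolding q_def using m by simp
  have "eventually (\<lambda>l. 0 \<le> real (k l) - 2 * real l * f l) sequentially"
    using k unfolding filterlim_at_top by blast
  moreover have "eventually (\<lambda>l. 1 \<le> (real l - 2) / ((2 * real (k l) + 2) * q ^ (2 * k l))) sequentially"
    using growth unfolding filterlim_at_top q_def by blast
  moreover have "eventually (\<lambda>l. 2 \<le> q powr (real l * (1/2 - f l))) sequentially"
    using relator_exponent_at_top[OF m f] unfolding filterlim_at_top q_def by blast
  ultimately show ?thesis
  proof eventually_elim
    case (elim l)
    have "(2 * real (k l) + 2) * q ^ (2 * k l) > 0" using q by simp
    with elim(2) have "(2 * real (k l) + 2) * q ^ (2 * k l) \<le> real l - 2"
      by (simp add: le_divide_eq)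
    with elim(1,3) show ?case
      using powr_div_sq_le[OF q, of "real l" "f l" "k l" "real (num_relators m f l)"]
        num_relators_ge[of m l f] m
      unfolding q_def by simp
  qed
qed

lemma swap_failure_bound_le:
  fixes q :: real and N l :: nat
  assumes q: "q \<ge> 0" and l: "l \<ge> 3" and N: "N \<ge> 1"
    and ratio: "q ^ l / (real N)\<^sup>2 \<le> 4 * sqrt (real l - 2)"
  shows "swap_failure_bound q N l \<le> 128 * q ^ 3 / sqrt (real l - 2) + 48 * q ^ 3 / real N"
proof -
  have l2: "real l - 2 > 0" using l by simp
  have "32 * q ^ 3 * q ^ l / ((real N)\<^sup>2 * (real l - 2))
      = 32 * q ^ 3 * (q ^ l / (real N)\<^sup>2) / (real l - 2)"
    by simp
  also have "\<dots> \<le> 32 * q ^ 3 * (4 * sqrt (real l - 2)) / (real l - 2)"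
    using ratio q l2 by (intro divide_right_mono mult_left_mono) auto
  also have "\<dots> = 128 * q ^ 3 / sqrt (real l - 2)"
  proof -
    define r where "r = sqrt (real l - 2)"
    have "real l - 2 = r * r" "r > 0" unfolding r_def using l2 by simp_all
    then show ?thesis unfolding r_def[symmetric] by (simp add: field_simps)
  qed
  finally have first: "32 * q ^ 3 * q ^ l / ((real N)\<^sup>2 * (real l - 2)) \<le> 128 * q ^ 3 / sqrt (real l - 2)" .
  have "real l / (real l - 2) \<le> 3" using l2 l by (simp add: divide_le_eq)
  then have "16 * q ^ 3 / real N * (real l / (real l - 2)) \<le> 16 * q ^ 3 / real N * 3"
    using q by (intro mult_left_mono) auto
  then have "16 * q ^ 3 * real l / (real N * (real l - 2)) \<le> 48 * q ^ 3 / real N"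
    by simp
  with first show ?thesis unfolding swap_failure_bound_def by linarith
qed

lemma swap_failure_bound_tendsto_0:
  fixes q :: real and N :: "nat \<Rightarrow> nat"
  assumes q: "q \<ge> 0" and N: "filterlim (\<lambda>l. real (N l)) at_top sequentially"
    and ratio: "eventually (\<lambda>l. q ^ l / (real (N l))\<^sup>2 \<le> 4 * sqrt (real l - 2)) sequentially"
  shows "(\<lambda>l. swap_failure_bound q (N l) l) \<longlonglongrightarrow> 0"
proof (rule tendsto_sandwich)
  show "eventually (\<lambda>l. 0 \<le> swap_failure_bound q (N l) l) sequentially"
    using eventually_ge_at_top[of "3::nat"]
    by eventually_elim (use q in \<open>simp add: swap_failure_bound_def\<close>)
  have "eventually (\<lambda>l. 1 \<le> real (N l)) sequentially"
    using N unfolding filterlim_at_top by blast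
  with ratio eventually_ge_at_top[of "3::nat"]
  show "eventually (\<lambda>l. swap_failure_bound q (N l) l
          \<le> 128 * q ^ 3 * inverse (sqrt (real l - 2)) + 48 * q ^ 3 * inverse (real (N l))) sequentially"
    by eventually_elim (use swap_failure_bound_le q in \<open>simp add: divide_inverse\<close>)
  have "((\<lambda>l::nat. inverse (sqrt (real l - 2))) \<longlongrightarrow> 0) sequentially"
    by real_asymp
  from tendsto_add[OF tendsto_mult[OF tendsto_const this]
      tendsto_mult[OF tendsto_const tendsto_inverse_0_at_top[OF N]]]
  show "(\<lambda>l. 128 * q ^ 3 * inverse (sqrt (real l - 2)) + 48 * q ^ 3 * inverse (real (N l)))
          \<longlonglongrightarrow> 0"
    by simp
qed auto

theorem theorem3p1:
  fixes m :: nat and f :: "nat \<Rightarrow> real" and k :: "nat \<Rightarrow> nat"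
  assumes "m \<ge> 2"
    and "f \<longlonglongrightarrow> 0"
    and "\<And>l. k l \<le> l"
    and "filterlim (\<lambda>l. real (k l) - 2 * real l * f l) at_top sequentially"
    and "filterlim (\<lambda>l. (real l - 2) / ((2 * real (k l) + 2) * (2 * real m - 1) ^ (2 * k l)))
           at_top sequentially"
  shows "(\<lambda>l. prob_H m f l (\<lambda>G. G \<cong> singleton_group () \<or> G \<cong> Z2_group)) \<longlonglongrightarrow> 1"
proof -
  define q where "q = 2 * real m - 1"
  define N where "N l = num_relators m f l" for l
  have q: "real (2 * m - 1) = q" "q > 0" unfolding q_def using assms(1) by (simp_all add: of_nat_diff)
  have N_top: "filterlim (\<lambda>l. real (N l)) at_top sequentially"
    unfolding N_def by (rule num_relators_at_top[OF assms(1,2)])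
  have "eventually (\<lambda>l. q ^ l / (real (N l))\<^sup>2 \<le> 4 * sqrt (real l - 2)) sequentially"
    using eventually_powr_div_num_relators_sq_le[OF assms(1,2,4,5)]
    by eventually_elim (use q(2) in \<open>simp add: q_def N_def powr_realpow\<close>)
  then have "(\<lambda>l. swap_failure_bound q (N l) l) \<longlonglongrightarrow> 0"
    using swap_failure_bound_tendsto_0 N_top q(2) by simp
  from tendsto_diff[OF tendsto_const tendsto_mult[OF tendsto_const this]]
  have lower_tendsto: "(\<lambda>l. 1 - real (2 * m) * swap_failure_bound q (N l) l) \<longlonglongrightarrow> 1"
    by simp
  have "eventually (\<lambda>l. 4 \<le> real (N l)) sequentially"
    using N_top unfolding filterlim_at_top by blast
  with eventually_ge_at_top[of "3::nat"]
  have "eventually (\<lambda>l. 1 - real (2 * m) * swap_failure_bound q (N l) l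
          \<le> prob_H m f l (\<lambda>G. G \<cong> singleton_group () \<or> G \<cong> Z2_group)) sequentially"
    by eventually_elim (use prob_H_trivial_or_Z2_ge[OF assms(1)] q(1) in \<open>simp add: N_def\<close>)
  moreover have "eventually (\<lambda>l. prob_H m f l (\<lambda>G. G \<cong> singleton_group () \<or> G \<cong> Z2_group) \<le> 1)
                   sequentially"
    by (simp add: prob_H_le_1)
  ultimately show ?thesis
    by (rule tendsto_sandwich[OF _ _ lower_tendsto tendsto_const])
qed

end
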